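(* Let $(G,S)$ and $(H,S)$ be two compatible $d$-labeled boundaried graphs such that $\mathbf{Aux}(G,S)\oplus\mathbf{Aux}(H,S)$ has no cycles. If $F$ is an $S$-block of $(G,S)\oplus(H,S)$ and $uv$ is an edge of $F$, then $uv$ is contained in some $S$-block of $G$ or of $H$.
   Context: A block of a graph is a maximal connected subgraph without a cut vertex. A block $d$-labeling of a graph whose blocks have at most $d$ vertices is a map $V(G)\to[d]$ injective on each block; a $d$-labeled boundaried graph is a pair $(G,S)$ with $S\subseteq V(G)$ and $G$ carrying such a labeling. $(G,S)$ and $(H,S)$ are compatible if $V(G-S)\cap V(H-S)=\emptyset$, $G[S]=H[S]$, and labels agree on $S$. The sum $(G,S)\oplus(H,S)$ is the graph obtained from the disjoint union of $G$ and $H$ by identifying corresponding vertices of $S$ and removing duplicate edges inside $S$. For a boundaried graph $(G,S)$, an $S$-block is a block of $G$ containing an edge of $G[S]$ (for the sum, $S$-blocks are blocks of the sum containing an edge of $G[S]$). $\mathbf{Aux}(G,S)$ is the bipartite graph whose vertices are the connected components of $G$ and the connected components of $G[S]$, a component $C_1$ of $G$ adjacent to a component $C_2$ of $G[S]$ iff $C_2\subseteq C_1$; $\mathbf{Aux}(G,S)\oplus\mathbf{Aux}(H,S)$ is the disjoint union of $\mathbf{Aux}(G,S)$ and $\mathbf{Aux}(H,S)$ with the vertices corresponding to the same component of $G[S]=H[S]$ identified. *)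

theory Defs
  imports Main
begin

type_synonym 'a graph = "'a set \<times> 'a set set"

definition verts :: "'a graph \<Rightarrow> 'a set" where "verts G = fst G"
definition edges :: "'a graph \<Rightarrow> 'a set set" where "edges G = snd G"

definition wf_graph :: "'a graph \<Rightarrow> bool" where
  "wf_graph G \<longleftrightarrow> finite (verts G) \<and>
     (\<forall>e\<in>edges G. \<exists>u v. e = {u, v} \<and> u \<noteq> v \<and> u \<in> verts G \<and> v \<in> verts G)"

definition adj_rel :: "'a graph \<Rightarrow> ('a \<times> 'a) set" where
  "adj_rel G = {(x, y). {x, y} \<in> edges G}"

definition reach :: "'a graph \<Rightarrow> 'a \<Rightarrow> 'a \<Rightarrow> bool" where
  "reach G x y \<longleftrightarrow> x \<in> verts G \<and> (x, y) \<in> (adj_rel G)\<^sup>*"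

definition connected_graph :: "'a graph \<Rightarrow> bool" where
  "connected_graph G \<longleftrightarrow> verts G \<noteq> {} \<and> (\<forall>x\<in>verts G. \<forall>y\<in>verts G. reach G x y)"

definition components :: "'a graph \<Rightarrow> 'a set set" where
  "components G = (\<lambda>x. {y. reach G x y}) ` verts G"

definition del_vertex :: "'a graph \<Rightarrow> 'a \<Rightarrow> 'a graph" where
  "del_vertex G v = (verts G - {v}, {e \<in> edges G. v \<notin> e})"

definition cut_vertex :: "'a graph \<Rightarrow> 'a \<Rightarrow> bool" where
  "cut_vertex G v \<longleftrightarrow> v \<in> verts G \<and>
     (\<exists>x\<in>verts G - {v}. \<exists>y\<in>verts G - {v}. reach G x y \<and> \<not> reach (del_vertex G v) x y)"

definition subgraph :: "'a graph \<Rightarrow> 'a graph \<Rightarrow> bool" where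
  "subgraph B G \<longleftrightarrow> wf_graph B \<and> verts B \<subseteq> verts G \<and> edges B \<subseteq> edges G"

definition induced :: "'a graph \<Rightarrow> 'a set \<Rightarrow> 'a graph" where
  "induced G S = (S, {e \<in> edges G. e \<subseteq> S})"

definition biconn_candidate :: "'a graph \<Rightarrow> 'a graph \<Rightarrow> bool" where
  "biconn_candidate G B \<longleftrightarrow> subgraph B G \<and> connected_graph B \<and> (\<forall>v. \<not> cut_vertex B v)"

definition is_block :: "'a graph \<Rightarrow> 'a graph \<Rightarrow> bool" where
  "is_block G B \<longleftrightarrow> biconn_candidate G B \<and>
     (\<forall>B'. biconn_candidate G B' \<and> verts B \<subseteq> verts B' \<and> edges B \<subseteq> edges B' \<longrightarrow> B' = B)"

definition block_labeling :: "nat \<Rightarrow> 'a graph \<Rightarrow> ('a \<Rightarrow> nat) \<Rightarrow> bool" where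
  "block_labeling d G lab \<longleftrightarrow>
     (\<forall>B. is_block G B \<longrightarrow> card (verts B) \<le> d \<and> inj_on lab (verts B)) \<and>
     lab ` verts G \<subseteq> {1..d}"

definition labeled_boundaried :: "nat \<Rightarrow> 'a graph \<Rightarrow> 'a set \<Rightarrow> ('a \<Rightarrow> nat) \<Rightarrow> bool" where
  "labeled_boundaried d G S lab \<longleftrightarrow> wf_graph G \<and> S \<subseteq> verts G \<and> block_labeling d G lab"

definition compatible ::
  "'a graph \<Rightarrow> ('a \<Rightarrow> nat) \<Rightarrow> 'a graph \<Rightarrow> ('a \<Rightarrow> nat) \<Rightarrow> 'a set \<Rightarrow> bool" where
  "compatible G labG H labH S \<longleftrightarrow>
     (verts G - S) \<inter> (verts H - S) = {} \<and> induced G S = induced H S \<and>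
     (\<forall>x\<in>S. labG x = labH x)"

text \<open>The sum: union of the two graphs (shared vertices are exactly those of S).\<close>
definition gsum :: "'a graph \<Rightarrow> 'a graph \<Rightarrow> 'a graph" where
  "gsum G H = (verts G \<union> verts H, edges G \<union> edges H)"

text \<open>S-block of (G,S) (with S-edges taken from the graph G0 providing G0[S]).\<close>
definition S_block :: "'a graph \<Rightarrow> 'a graph \<Rightarrow> 'a set \<Rightarrow> 'a graph \<Rightarrow> bool" where
  "S_block G G0 S B \<longleftrightarrow> is_block G B \<and> (\<exists>e\<in>edges (induced G0 S). e \<in> edges B)"

text \<open>Aux(G,S) \<oplus> Aux(H,S): vertices (0,D) for components D of G[S]=H[S],
  (1,C) for components of G, (2,C) for components of H.\<close>
definition aux_sum :: "'a graph \<Rightarrow> 'a graph \<Rightarrow> 'a set \<Rightarrow> (nat \<times> 'a set) graph" where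
  "aux_sum G H S =
    ({(0, D) | D. D \<in> components (induced G S)} \<union>
     {(1, C) | C. C \<in> components G} \<union> {(2, C) | C. C \<in> components H},
     {{(1, C), (0, D)} | C D. C \<in> components G \<and> D \<in> components (induced G S) \<and> D \<subseteq> C} \<union>
     {{(2, C), (0, D)} | C D. C \<in> components H \<and> D \<in> components (induced H S) \<and> D \<subseteq> C})"

definition has_cycle :: "'b graph \<Rightarrow> bool" where
  "has_cycle G \<longleftrightarrow> (\<exists>vs. length vs \<ge> 3 \<and> distinct vs \<and> set vs \<subseteq> verts G \<and>
     (\<forall>i. Suc i < length vs \<longrightarrow> {vs ! i, vs ! Suc i} \<in> edges G) \<and>
     {last vs, hd vs} \<in> edges G)"

end

theory Submission
  imports Defs "HOL-Library.Transitive_Closure_Table" "HOL-Library.Product_Order"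
begin

(* Suppose uv lies in a block B of G containing no edge of G[S] (the case of H is symmetric).
   The S-block F of the sum contains uv and an edge of G[S], so it leaves B and comes back:
   F contains a path between two distinct vertices x, y of B avoiding the edges of B.
   Every stretch of this path outside the component C of G containing B runs through H,
   leaving and re-entering C at vertices c, w of S. In Aux it becomes a walk from the
   G[S]-component of c to that of w avoiding the node C; both components are adjacent to C
   and Aux is acyclic, so they coincide and the stretch can be replaced by a path in G[S].
   The result is a path in G between x and y avoiding the edges of B, and adding it to B
   contradicts the maximality of B. *)

section \<open>Reachability and components\<close>

lemma verts_pair [simp]: "verts (V, E) = V" and edges_pair [simp]: "edges (V, E) = E"
  by (simp_all add: verts_def edges_def)

definition edge_adj :: "'a set set \<Rightarrow> ('a \<times> 'a) set" where
  "edge_adj E = {(x, y). {x, y} \<in> E}"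

lemma adj_rel_eq_edge_adj: "adj_rel G = edge_adj (edges G)"
  by (simp add: adj_rel_def edge_adj_def)

lemma sym_edge_adj: "sym (edge_adj E)"
  by (auto intro: symI simp: edge_adj_def insert_commute)

lemma edge_adj_rtrancl_sym: "(x, y) \<in> (edge_adj E)\<^sup>* \<Longrightarrow> (y, x) \<in> (edge_adj E)\<^sup>*"
  using sym_rtrancl[OF sym_edge_adj] by (rule symD)

lemma edge_adj_rtrancl_mono: "E \<subseteq> E' \<Longrightarrow> (x, y) \<in> (edge_adj E)\<^sup>* \<Longrightarrow> (x, y) \<in> (edge_adj E')\<^sup>*"
  using rtrancl_mono[of "edge_adj E" "edge_adj E'"] by (auto simp: edge_adj_def)

lemma wf_graph_edgeD:
  "wf_graph G \<Longrightarrow> {x, y} \<in> edges G \<Longrightarrow> x \<in> verts G \<and> y \<in> verts G \<and> x \<noteq> y"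
  unfolding wf_graph_def by (metis doubleton_eq_iff)

lemma wf_graph_finite_edges: "wf_graph G \<Longrightarrow> finite (edges G)"
  unfolding wf_graph_def
  by (rule finite_subset[of _ "Pow (verts G)"]) auto

lemma graph_eqI: "verts X = verts Y \<Longrightarrow> edges X = edges Y \<Longrightarrow> X = Y"
  by (cases X, cases Y) (simp add: verts_def edges_def)

lemma reach_refl: "x \<in> verts G \<Longrightarrow> reach G x x"
  by (simp add: reach_def)

lemma reach_edge: "x \<in> verts G \<Longrightarrow> {x, y} \<in> edges G \<Longrightarrow> reach G x y"
  by (auto simp: reach_def adj_rel_eq_edge_adj edge_adj_def)

lemma reach_trans: "reach G x y \<Longrightarrow> reach G y z \<Longrightarrow> reach G x z"
  unfolding reach_def by auto

lemma reach_in_verts: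
  assumes "wf_graph G" "reach G x y"
  shows "y \<in> verts G"
proof -
  have "(x, y) \<in> (edge_adj (edges G))\<^sup>*" "x \<in> verts G"
    using assms(2) by (simp_all add: reach_def adj_rel_eq_edge_adj)
  then show ?thesis
  proof (induction rule: rtrancl_induct)
    case (step y z)
    then show ?case using wf_graph_edgeD[OF assms(1), of y z] by (simp add: edge_adj_def)
  qed
qed

lemma reach_sym: "wf_graph G \<Longrightarrow> reach G x y \<Longrightarrow> reach G y x"
  using reach_in_verts[of G x y] edge_adj_rtrancl_sym[of x y "edges G"]
  by (simp add: reach_def adj_rel_eq_edge_adj)

lemma reach_mono:
  "verts X \<subseteq> verts Y \<Longrightarrow> edges X \<subseteq> edges Y \<Longrightarrow> reach X a b \<Longrightarrow> reach Y a b"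
  using edge_adj_rtrancl_mono[of "edges X" "edges Y" a b]
  by (auto simp: reach_def adj_rel_eq_edge_adj)

definition comp_of :: "'a graph \<Rightarrow> 'a \<Rightarrow> 'a set" where
  "comp_of G z = {y. reach G z y}"

lemma comp_of_self: "z \<in> verts G \<Longrightarrow> z \<in> comp_of G z"
  by (simp add: comp_of_def reach_refl)

lemma comp_of_in_components: "z \<in> verts G \<Longrightarrow> comp_of G z \<in> components G"
  by (simp add: comp_of_def components_def)

lemma comp_of_subset_verts: "wf_graph G \<Longrightarrow> comp_of G z \<subseteq> verts G"
  unfolding comp_of_def using reach_in_verts[of G z] by blast

lemma comp_of_eq:
  assumes "wf_graph G" "reach G a b"
  shows "comp_of G a = comp_of G b"
  unfolding comp_of_def using reach_trans[OF assms(2)] reach_trans[OF reach_sym[OF assms]]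
  by blast

lemma comp_of_edge_closed:
  assumes "wf_graph G" "y \<in> comp_of G z" "{y, w} \<in> edges G"
  shows "w \<in> comp_of G z"
proof -
  have "y \<in> verts G" using comp_of_subset_verts[OF assms(1)] assms(2) by blast
  then have "reach G y w" using assms(3) by (rule reach_edge)
  moreover have "reach G z y" using assms(2) by (simp add: comp_of_def)
  ultimately show ?thesis by (simp add: comp_of_def reach_trans)
qed

lemma wf_graph_del_vertex: "wf_graph G \<Longrightarrow> wf_graph (del_vertex G w)"
  unfolding wf_graph_def del_vertex_def verts_def edges_def by fastforce

lemma verts_del_vertex [simp]: "verts (del_vertex G w) = verts G - {w}"
  by (simp add: del_vertex_def verts_def)

lemma edges_del_vertex [simp]: "edges (del_vertex G w) = {e \<in> edges G. w \<notin> e}"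
  by (simp add: del_vertex_def edges_def)

lemma del_vertex_notin:
  assumes "wf_graph G" "w \<notin> verts G"
  shows "del_vertex G w = G"
proof (rule graph_eqI)
  have "w \<notin> e" if e: "e \<in> edges G" for e
  proof -
    obtain u v where "e = {u, v}" using e assms(1) unfolding wf_graph_def by blast
    then show ?thesis using e assms(2) wf_graph_edgeD[OF assms(1), of u v] by auto
  qed
  then show "edges (del_vertex G w) = edges G" by auto
qed (simp add: assms(2))

lemma verts_induced [simp]: "verts (induced G S) = S"
  by (simp add: induced_def verts_def)

lemma edges_induced [simp]: "edges (induced G S) = {e \<in> edges G. e \<subseteq> S}"
  by (simp add: induced_def edges_def)

lemma wf_graph_induced:
  assumes "wf_graph G" "S \<subseteq> verts G"
  shows "wf_graph (induced G S)"
  unfolding wf_graph_def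
proof (intro conjI ballI)
  show "finite (verts (induced G S))" using assms finite_subset unfolding wf_graph_def by auto
next
  fix e assume e: "e \<in> edges (induced G S)"
  then obtain u v where "e = {u, v}" "u \<noteq> v" using assms(1) unfolding wf_graph_def by auto
  then show "\<exists>u v. e = {u, v} \<and> u \<noteq> v \<and> u \<in> verts (induced G S) \<and> v \<in> verts (induced G S)"
    using e by auto
qed

lemma comp_of_induced_subset:
  "S \<subseteq> verts G \<Longrightarrow> comp_of (induced G S) z \<subseteq> comp_of G z"
  unfolding comp_of_def using reach_mono[of "induced G S" G z] by auto

lemma biconn_candidate_wf: "biconn_candidate G B \<Longrightarrow> wf_graph B"
  by (simp add: biconn_candidate_def subgraph_def)

lemma biconn_candidate_reach_del:
  assumes "biconn_candidate G B" "x \<in> verts B - {w}" "y \<in> verts B - {w}"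
  shows "reach (del_vertex B w) x y"
proof -
  have r: "reach B x y"
    using assms by (auto simp: biconn_candidate_def connected_graph_def)
  show ?thesis
  proof (cases "w \<in> verts B")
    case True
    then show ?thesis using assms r by (auto simp: biconn_candidate_def cut_vertex_def)
  next
    case False
    then show ?thesis using del_vertex_notin[OF biconn_candidate_wf[OF assms(1)] False] r by simp
  qed
qed

section \<open>Paths and ears\<close>

fun path_edges :: "'a list \<Rightarrow> 'a set set" where
  "path_edges (a # b # xs) = insert {a, b} (path_edges (b # xs))"
| "path_edges _ = {}"

lemma path_edges_subset_set: "e \<in> path_edges ps \<Longrightarrow> e \<subseteq> set ps"
  by (induction ps rule: path_edges.induct) auto

lemma path_edges_Cons: "path_edges ps \<subseteq> path_edges (a # ps)"
  by (cases ps) auto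

lemma path_edges_append: "path_edges xs \<union> path_edges ys \<subseteq> path_edges (xs @ ys)"
  by (induction xs rule: path_edges.induct) (auto intro: path_edges_Cons[THEN subsetD])

lemma path_edges_take: "path_edges (take n ps) \<subseteq> path_edges ps"
  using path_edges_append[of "take n ps" "drop n ps"] by simp

lemma path_edges_drop: "path_edges (drop n ps) \<subseteq> path_edges ps"
  using path_edges_append[of "take n ps" "drop n ps"] by simp

lemma path_edges_reach: "ps \<noteq> [] \<Longrightarrow> (hd ps, last ps) \<in> (edge_adj (path_edges ps))\<^sup>*"
proof (induction ps rule: path_edges.induct)
  case (1 a b xs)
  have "(b, last (b # xs)) \<in> (edge_adj (path_edges (a # b # xs)))\<^sup>*"
    using edge_adj_rtrancl_mono[OF path_edges_Cons "1.IH"] by simp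
  moreover have "(a, b) \<in> edge_adj (path_edges (a # b # xs))"
    by (simp add: edge_adj_def)
  ultimately show ?case by (simp add: converse_rtrancl_into_rtrancl)
qed simp_all

lemma path_edges_reach_nth:
  assumes "i < length ps"
  shows "(hd ps, ps ! i) \<in> (edge_adj (path_edges (take (Suc i) ps)))\<^sup>*"
    and "(ps ! i, last ps) \<in> (edge_adj (path_edges (drop i ps)))\<^sup>*"
proof -
  have ne: "take (Suc i) ps \<noteq> []" "drop i ps \<noteq> []" using assms by auto
  have "hd (take (Suc i) ps) = hd ps" using assms by (cases ps) auto
  moreover have "last (take (Suc i) ps) = ps ! i" using assms by (simp add: take_Suc_conv_app_nth)
  ultimately show "(hd ps, ps ! i) \<in> (edge_adj (path_edges (take (Suc i) ps)))\<^sup>*"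
    using path_edges_reach[OF ne(1)] by simp
  have "hd (drop i ps) = ps ! i" "last (drop i ps) = last ps"
    using assms by (simp_all add: hd_drop_conv_nth)
  then show "(ps ! i, last ps) \<in> (edge_adj (path_edges (drop i ps)))\<^sup>*"
    using path_edges_reach[OF ne(2)] by simp
qed

lemma path_edges_distinct_wf:
  "distinct ps \<Longrightarrow> e \<in> path_edges ps \<Longrightarrow> \<exists>a b. e = {a, b} \<and> a \<noteq> b \<and> a \<in> set ps \<and> b \<in> set ps"
  by (induction ps rule: path_edges.induct) auto

lemma path_edges_cover: "2 \<le> length ps \<Longrightarrow> x \<in> set ps \<Longrightarrow> \<exists>e\<in>path_edges ps. x \<in> e"
proof (induction ps rule: path_edges.induct)
  case (1 a b xs)
  show ?case
  proof (cases "x = a \<or> x = b")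
    case False
    then have "x \<in> set xs" using "1.prems" by simp
    then have "2 \<le> length (b # xs)" by (cases xs) auto
    then show ?thesis using "1.IH" "1.prems" False by auto
  qed auto
qed auto

lemma path_verts_subset:
  assumes wfG: "wf_graph G" and "2 \<le> length ps" and psG: "path_edges ps \<subseteq> edges G"
  shows "set ps \<subseteq> verts G"
proof
  fix x assume "x \<in> set ps"
  then obtain e where e: "e \<in> edges G" "x \<in> e" using path_edges_cover[OF assms(2)] psG by blast
  then obtain u v where "e = {u, v}" "u \<in> verts G" "v \<in> verts G"
    using wfG unfolding wf_graph_def by blast
  then show "x \<in> verts G" using e(2) by blast
qed

lemma rtrancl_path_edges:
  "rtrancl_path (\<lambda>a b. (a, b) \<in> edge_adj E) x xs y \<Longrightarrow> path_edges (x # xs) \<subseteq> E \<and> last (x # xs) = y"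
proof (induction rule: rtrancl_path.induct)
  case (step x y ys z)
  then show ?case by (cases ys) (auto simp: edge_adj_def)
qed simp

lemma rtrancl_distinct_path:
  assumes "(x, y) \<in> R\<^sup>*"
  obtains xs where "rtrancl_path (\<lambda>a b. (a, b) \<in> R) x xs y" "distinct (x # xs)"
proof -
  have "(\<lambda>a b. (a, b) \<in> R)\<^sup>*\<^sup>* x y" using assms by (simp add: rtranclp_rtrancl_eq)
  then obtain xs where "rtrancl_path (\<lambda>a b. (a, b) \<in> R) x xs y"
    by (auto simp: rtranclp_eq_rtrancl_path)
  then show ?thesis using that by (blast elim: rtrancl_path_distinct)
qed

lemma wf_graph_add_path:
  assumes "wf_graph B" "distinct ps"
  shows "wf_graph (verts B \<union> set ps, edges B \<union> path_edges ps)"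
proof -
  have "\<exists>u v. e = {u, v} \<and> u \<noteq> v \<and> u \<in> verts B \<union> set ps \<and> v \<in> verts B \<union> set ps"
    if "e \<in> edges B \<union> path_edges ps" for e
    using that assms(1) path_edges_distinct_wf[OF assms(2), of e] unfolding wf_graph_def by blast
  then show ?thesis using assms(1) unfolding wf_graph_def by simp
qed

lemma add_path_reaches_base:
  fixes B :: "'a graph" and ps :: "'a list"
  defines "B' \<equiv> (verts B \<union> set ps, edges B \<union> path_edges ps)"
  assumes ps: "distinct ps" "hd ps \<in> verts B" "last ps \<in> verts B"
    and z: "z \<in> verts B'" "z \<noteq> w"
  shows "\<exists>b\<in>verts B - {w}. reach (del_vertex B' w) z b"
proof (cases "z \<in> verts B")
  case True
  then show ?thesis using z by (intro bexI[of _ z] reach_refl) auto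
next
  case False
  then obtain i where i: "i < length ps" "ps ! i = z"
    using z(1) by (auto simp: B'_def in_set_conv_nth)
  have avoid: "path_edges qs \<subseteq> edges (del_vertex B' w)" if "w \<notin> set qs" "path_edges qs \<subseteq> path_edges ps"
    for qs
    using that path_edges_subset_set[of _ qs] by (auto simp: B'_def)
  have zB': "z \<in> verts (del_vertex B' w)" using z by simp
  show ?thesis
  proof (cases "w \<in> set (take (Suc i) ps)")
    case False
    then have "(hd ps, z) \<in> (edge_adj (edges (del_vertex B' w)))\<^sup>*"
      using path_edges_reach_nth(1)[OF i(1)] avoid[OF False path_edges_take] i(2)
        edge_adj_rtrancl_mono by metis
    then have "(z, hd ps) \<in> (edge_adj (edges (del_vertex B' w)))\<^sup>*"
      by (rule edge_adj_rtrancl_sym)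
    moreover have "hd ps \<noteq> w" using False i(1) by (cases ps) auto
    ultimately show ?thesis using zB' ps(2) by (auto simp: reach_def adj_rel_eq_edge_adj)
  next
    case True
    have "set (take (Suc i) ps) \<inter> set (drop (Suc i) ps) = {}"
      using ps(1) by (metis append_take_drop_id distinct_append)
    moreover have "drop i ps = z # drop (Suc i) ps" using i by (metis Cons_nth_drop_Suc)
    ultimately have w_drop: "w \<notin> set (drop i ps)" using True z(2) by auto
    then have "(z, last ps) \<in> (edge_adj (edges (del_vertex B' w)))\<^sup>*"
      using path_edges_reach_nth(2)[OF i(1)] avoid[OF w_drop path_edges_drop] i(2)
        edge_adj_rtrancl_mono by metis
    moreover have "last ps \<noteq> w"
      using w_drop i(1) by (metis last_drop last_in_set drop_eq_Nil not_le)
    ultimately show ?thesis using zB' ps(3) by (auto simp: reach_def adj_rel_eq_edge_adj)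
  qed
qed

lemma biconn_candidate_add_path:
  assumes bc: "biconn_candidate G B" and wfG: "wf_graph G"
    and ps: "distinct ps" "ps \<noteq> []" "hd ps \<in> verts B" "last ps \<in> verts B" "hd ps \<noteq> last ps"
    and psG: "path_edges ps \<subseteq> edges G"
  shows "biconn_candidate G (verts B \<union> set ps, edges B \<union> path_edges ps)"
    (is "biconn_candidate G ?B'")
proof -
  have wfB: "wf_graph B" using bc by (rule biconn_candidate_wf)
  have wfB': "wf_graph ?B'" using wf_graph_add_path[OF wfB ps(1)] .
  have "2 \<le> length ps"
  proof (rule ccontr)
    assume "\<not> 2 \<le> length ps"
    with ps(2) obtain a where "ps = [a]" by (cases ps) (auto simp: numeral_2_eq_2 Suc_le_eq)
    with ps(5) show False by simp
  qed
  then have "set ps \<subseteq> verts G" by (rule path_verts_subset[OF wfG _ psG])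
  then have sub: "subgraph ?B' G"
    using wfB' bc psG by (auto simp: biconn_candidate_def subgraph_def)
  have del_reach: "reach (del_vertex ?B' w) x y" if xw: "x \<in> verts ?B' - {w}" and yw: "y \<in> verts ?B' - {w}"
    for w x y
  proof -
    obtain b1 where b1: "b1 \<in> verts B - {w}" "reach (del_vertex ?B' w) x b1"
      using add_path_reaches_base[OF ps(1,3,4), of x w] xw by auto
    obtain b2 where b2: "b2 \<in> verts B - {w}" "reach (del_vertex ?B' w) y b2"
      using add_path_reaches_base[OF ps(1,3,4), of y w] yw by auto
    have "reach (del_vertex B w) b1 b2" using biconn_candidate_reach_del[OF bc b1(1) b2(1)] .
    then have "reach (del_vertex ?B' w) b1 b2" by (rule reach_mono[rotated 2]) auto
    then show ?thesis
      using reach_trans[OF reach_trans[OF b1(2)] reach_sym[OF wf_graph_del_vertex[OF wfB'] b2(2)]]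
      by blast
  qed
  have to_hd: "reach ?B' z (hd ps)" if z: "z \<in> verts ?B'" for z
  proof (cases "z = hd ps")
    case True
    then show ?thesis using z by (simp add: reach_refl)
  next
    case False
    then obtain b where b: "b \<in> verts B" "reach (del_vertex ?B' (hd ps)) z b"
      using add_path_reaches_base[OF ps(1,3,4) z False] by blast
    have "reach ?B' z b" using b(2) by (rule reach_mono[rotated 2]) auto
    moreover have "reach ?B' b (hd ps)"
      using bc b(1) ps(3) reach_mono[of B ?B']
      by (auto simp: biconn_candidate_def connected_graph_def)
    ultimately show ?thesis by (rule reach_trans)
  qed
  have "connected_graph ?B'"
    unfolding connected_graph_def
  proof (intro conjI ballI)
    show "verts ?B' \<noteq> {}" using ps(3) by auto
  next
    fix x y assume "x \<in> verts ?B'" "y \<in> verts ?B'"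
    then have "reach ?B' x (hd ps)" "reach ?B' (hd ps) y"
      using to_hd reach_sym[OF wfB'] by blast+
    then show "reach ?B' x y" by (rule reach_trans)
  qed
  moreover have "\<not> cut_vertex ?B' w" for w
    using del_reach unfolding cut_vertex_def by blast
  ultimately show ?thesis using sub by (simp add: biconn_candidate_def)
qed

section \<open>Blocks\<close>

lemma biconn_candidate_edge:
  assumes wfG: "wf_graph G" and e: "{u, v} \<in> edges G"
  shows "biconn_candidate G ({u, v}, {{u, v}})" (is "biconn_candidate G ?K")
proof -
  have uv: "u \<in> verts G" "v \<in> verts G" "u \<noteq> v" using wf_graph_edgeD[OF wfG e] by auto
  have wfK: "wf_graph ?K" using uv unfolding wf_graph_def by auto
  have "reach ?K x y" if "x \<in> verts ?K" "y \<in> verts ?K" for x y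
    using that reach_edge[of u ?K v] reach_edge[of v ?K u] reach_refl[of _ ?K]
    by (auto simp: insert_commute)
  then have "connected_graph ?K" by (auto simp: connected_graph_def)
  moreover have "\<not> cut_vertex ?K w" for w
    using reach_refl[of _ "del_vertex ?K w"] by (auto simp: cut_vertex_def)
  ultimately show ?thesis using wfK uv e by (auto simp: biconn_candidate_def subgraph_def)
qed

lemma biconn_candidate_in_block:
  assumes wfG: "wf_graph G" and K: "biconn_candidate G K"
  shows "\<exists>B. is_block G B \<and> verts K \<subseteq> verts B \<and> edges K \<subseteq> edges B"
proof -
  define A where "A = {B. biconn_candidate G B}"
  have "A \<subseteq> Pow (verts G) \<times> Pow (edges G)"
    by (auto simp: A_def biconn_candidate_def subgraph_def verts_def edges_def)
  then have "finite A"
    using wfG wf_graph_finite_edges[OF wfG] finite_subset by (fastforce simp: wf_graph_def)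
  then obtain M where M: "M \<in> A" "K \<le> M" "\<And>B. B \<in> A \<Longrightarrow> M \<le> B \<Longrightarrow> M = B"
    using finite_has_maximal2[of A K] K by (auto simp: A_def)
  have le_iff: "X \<le> Y \<longleftrightarrow> verts X \<subseteq> verts Y \<and> edges X \<subseteq> edges Y" for X Y :: "'a graph"
    by (simp add: less_eq_prod_def verts_def edges_def)
  have "is_block G M"
    unfolding is_block_def
  proof (intro conjI allI impI)
    show "biconn_candidate G M" using M(1) by (simp add: A_def)
  next
    fix B' assume "biconn_candidate G B' \<and> verts M \<subseteq> verts B' \<and> edges M \<subseteq> edges B'"
    then show "B' = M" using M(3)[of B'] by (simp add: A_def le_iff)
  qed
  then show ?thesis using M(2) le_iff by blast
qed

lemma block_no_detour:
  assumes blk: "is_block G B" and wfG: "wf_graph G"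
    and xy: "x \<noteq> y" "x \<in> verts B" "y \<in> verts B"
    and EG: "E \<subseteq> edges G" and EB: "E \<inter> edges B = {}"
  shows "(x, y) \<notin> (edge_adj E)\<^sup>*"
proof
  assume "(x, y) \<in> (edge_adj E)\<^sup>*"
  then obtain xs where xs: "rtrancl_path (\<lambda>a b. (a, b) \<in> edge_adj E) x xs y" "distinct (x # xs)"
    by (rule rtrancl_distinct_path)
  let ?ps = "x # xs"
  have pe: "path_edges ?ps \<subseteq> E" "last ?ps = y" using rtrancl_path_edges[OF xs(1)] by auto
  have bc: "biconn_candidate G B" using blk by (simp add: is_block_def)
  have "biconn_candidate G (verts B \<union> set ?ps, edges B \<union> path_edges ?ps)"
    using biconn_candidate_add_path[OF bc wfG xs(2)] pe xy EG by auto
  then have "(verts B \<union> set ?ps, edges B \<union> path_edges ?ps) = B"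
    using blk unfolding is_block_def by auto
  then have "path_edges ?ps \<subseteq> edges B" by (metis Un_upper2 edges_pair)
  moreover obtain z zs where "xs = z # zs" using pe(2) xy(1) by (cases xs) auto
  then have "{x, z} \<in> path_edges ?ps" by simp
  ultimately show False using pe(1) EB by blast
qed

lemma edge_adj_last_exit:
  assumes "(a, b) \<in> (edge_adj E)\<^sup>*" "a \<in> V"
    and closed: "\<And>p q. {p, q} \<in> E \<inter> E' \<Longrightarrow> q \<in> V"
  shows "\<exists>x\<in>V. (x, b) \<in> (edge_adj (E - E'))\<^sup>*"
  using assms(1)
proof (induction rule: rtrancl_induct)
  case base
  then show ?case using assms(2) by blast
next
  case (step y w)
  show ?case
  proof (cases "w \<in> V")
    case False
    then have "(y, w) \<in> edge_adj (E - E')" using step(2) closed by (auto simp: edge_adj_def)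
    then show ?thesis using step(3) by (meson rtrancl_into_rtrancl)
  qed blast
qed

lemma biconn_candidate_leaves_and_returns:
  assumes F: "biconn_candidate K F" and wfB: "wf_graph B"
    and uv: "{u, v} \<in> edges B" "{u, v} \<in> edges F" and e: "e \<in> edges F" "e \<notin> edges B"
  shows "\<exists>x y. x \<noteq> y \<and> x \<in> verts B \<and> y \<in> verts B \<and> (x, y) \<in> (edge_adj (edges F - edges B))\<^sup>*"
proof -
  have wfF: "wf_graph F" using F by (rule biconn_candidate_wf)
  have uvB: "u \<in> verts B" "v \<in> verts B" "u \<noteq> v" using wf_graph_edgeD[OF wfB uv(1)] by auto
  have uvF: "u \<in> verts F" "v \<in> verts F" using wf_graph_edgeD[OF wfF uv(2)] by auto
  obtain s t where st: "e = {s, t}" "s \<noteq> t" "s \<in> verts F" "t \<in> verts F"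
    using e(1) wfF unfolding wf_graph_def by blast
  show ?thesis
  proof (cases "s \<in> verts B \<and> t \<in> verts B")
    case True
    moreover have "(s, t) \<in> edge_adj (edges F - edges B)" using st e by (simp add: edge_adj_def)
    ultimately show ?thesis using st(2) by blast
  next
    case False
    then obtain r where r: "r \<in> verts F" "r \<notin> verts B" using st by blast
    have B_closed: "q \<in> verts B" if "{p, q} \<in> E \<inter> edges B" for E p q
      using wf_graph_edgeD[OF wfB, of p q] that by blast
    have "reach F u r" using F uvF(1) r(1) by (simp add: biconn_candidate_def connected_graph_def)
    then have "(u, r) \<in> (edge_adj (edges F))\<^sup>*" by (simp add: reach_def adj_rel_eq_edge_adj)
    from edge_adj_last_exit[OF this uvB(1) B_closed] obtain x
      where x: "x \<in> verts B" "(x, r) \<in> (edge_adj (edges F - edges B))\<^sup>*" ..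
    \<comment> \<open>x is no cut vertex of F, so r also returns to B avoiding x\<close>
    obtain b where b: "b \<in> verts B - {x}" "b \<in> verts F" using uvB uvF by blast
    have "reach (del_vertex F x) b r"
      using biconn_candidate_reach_del[OF F] b r x(1) by auto
    then have br: "(b, r) \<in> (edge_adj {e \<in> edges F. x \<notin> e})\<^sup>*"
      by (simp add: reach_def adj_rel_eq_edge_adj)
    have closed: "q \<in> verts B - {x}" if "{p, q} \<in> {e \<in> edges F. x \<notin> e} \<inter> edges B" for p q
      using that B_closed[of p q] by auto
    from edge_adj_last_exit[OF br b(1) closed] obtain y where y: "y \<in> verts B - {x}"
      "(y, r) \<in> (edge_adj ({e \<in> edges F. x \<notin> e} - edges B))\<^sup>*" ..
    have "(y, r) \<in> (edge_adj (edges F - edges B))\<^sup>*"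
      by (rule edge_adj_rtrancl_mono[OF _ y(2)]) blast
    then have "(r, y) \<in> (edge_adj (edges F - edges B))\<^sup>*"
      by (rule edge_adj_rtrancl_sym)
    then show ?thesis using x y by (intro exI[of _ x] exI[of _ y]) auto
  qed
qed

section \<open>The auxiliary graph\<close>

lemma has_cycle_closing_path:
  assumes in_verts: "\<forall>e\<in>edges X. e \<subseteq> verts X"
    and a: "{n, a} \<in> edges X" and b: "{n, b} \<in> edges X" and ab: "a \<noteq> b" "a \<noteq> n"
    and path: "(a, b) \<in> {(p, q). {p, q} \<in> edges X \<and> p \<noteq> n \<and> q \<noteq> n}\<^sup>*"
  shows "has_cycle X"
proof -
  let ?R = "{(p, q). {p, q} \<in> edges X \<and> p \<noteq> n \<and> q \<noteq> n}"
  obtain xs where xs: "rtrancl_path (\<lambda>p q. (p, q) \<in> ?R) a xs b" "distinct (a # xs)"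
    using rtrancl_distinct_path[OF path] by blast
  have "xs \<noteq> []" using xs(1) ab(1) by (auto elim: rtrancl_path.cases)
  then have last: "last xs = b" using rtrancl_path_last[OF xs(1)] by simp
  have "n \<notin> set xs" using rtrancl_path_Range[OF xs(1)] by auto
  define vs where "vs = n # a # xs"
  have steps: "{vs ! i, vs ! Suc i} \<in> edges X" if "Suc i < length vs" for i
  proof (cases i)
    case 0
    then show ?thesis using a by (simp add: vs_def)
  next
    case (Suc j)
    then have "j < length xs" using that by (simp add: vs_def)
    then show ?thesis using rtrancl_path_nth[OF xs(1)] Suc by (simp add: vs_def)
  qed
  have closing: "{last vs, hd vs} \<in> edges X"
    using b last \<open>xs \<noteq> []\<close> by (simp add: vs_def insert_commute)
  have "z \<in> verts X" if z: "z \<in> set xs" for z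
  proof -
    obtain w where "{w, z} \<in> edges X" using rtrancl_path_Range[OF xs(1) z] by auto
    then show ?thesis using in_verts by blast
  qed
  moreover have "n \<in> verts X" "a \<in> verts X" using a in_verts by blast+
  ultimately have "set vs \<subseteq> verts X" by (auto simp: vs_def)
  moreover have "length vs \<ge> 3" "distinct vs"
    using \<open>xs \<noteq> []\<close> xs(2) \<open>n \<notin> set xs\<close> ab(2) by (auto simp: vs_def Suc_le_eq)
  ultimately show ?thesis using steps closing unfolding has_cycle_def by blast
qed

definition aux_node :: "'a graph \<Rightarrow> 'a graph \<Rightarrow> 'a set \<Rightarrow> 'a \<Rightarrow> nat \<times> 'a set" where
  "aux_node G H S z =
     (if z \<in> S then (0, comp_of (induced G S) z)
      else if z \<in> verts G then (1, comp_of G z) else (2, comp_of H z))"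

lemma aux_sum_edge_left:
  "C \<in> components G \<Longrightarrow> D \<in> components (induced G S) \<Longrightarrow> D \<subseteq> C \<Longrightarrow>
    {(1, C), (0, D)} \<in> edges (aux_sum G H S)"
  unfolding aux_sum_def edges_pair by blast

lemma aux_sum_edge_right:
  "C \<in> components H \<Longrightarrow> D \<in> components (induced H S) \<Longrightarrow> D \<subseteq> C \<Longrightarrow>
    {(2, C), (0, D)} \<in> edges (aux_sum G H S)"
  unfolding aux_sum_def edges_pair by blast

lemma aux_sum_edges_in_verts:
  assumes "induced G S = induced H S"
  shows "\<forall>e\<in>edges (aux_sum G H S). e \<subseteq> verts (aux_sum G H S)"
  using assms unfolding aux_sum_def edges_pair verts_pair by auto

locale boundaried_pair =
  fixes G H :: "'a graph" and S :: "'a set"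
  assumes wfG: "wf_graph G" and wfH: "wf_graph H"
    and SG: "S \<subseteq> verts G" and SH: "S \<subseteq> verts H"
    and disj: "(verts G - S) \<inter> (verts H - S) = {}"
    and ind: "induced G S = induced H S"
begin

abbreviation "node \<equiv> aux_node G H S"
abbreviation "aux \<equiv> aux_sum G H S"

definition aux_adj_avoiding :: "'a set \<Rightarrow> ((nat \<times> 'a set) \<times> (nat \<times> 'a set)) set" where
  "aux_adj_avoiding C = {(p, q). {p, q} \<in> edges aux \<and> p \<noteq> (1, C) \<and> q \<noteq> (1, C)}"

lemma shared_vertex_in_S: "x \<in> verts G \<Longrightarrow> x \<in> verts H \<Longrightarrow> x \<in> S"
  using disj by blast

lemma edge_between_G_verts:
  assumes "{y, w} \<in> edges G \<union> edges H" "y \<in> verts G" "w \<in> verts G"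
  shows "{y, w} \<in> edges G"
proof (rule ccontr)
  assume "{y, w} \<notin> edges G"
  then have H: "{y, w} \<in> edges H" using assms(1) by blast
  then have "y \<in> S" "w \<in> S" using wf_graph_edgeD[OF wfH H] assms(2,3) shared_vertex_in_S by auto
  then have "{y, w} \<in> edges (induced H S)" using H by simp
  then have "{y, w} \<in> edges (induced G S)" by (simp only: ind)
  with \<open>{y, w} \<notin> edges G\<close> show False by simp
qed

lemma aux_node_boundary_edge:
  assumes e: "{z, z'} \<in> edges G \<union> edges H" and zS: "z \<in> S" and z'S: "z' \<notin> S"
  shows "{node z, node z'} \<in> edges aux"
proof -
  let ?D = "comp_of (induced G S) z"
  have D: "?D \<in> components (induced G S)" "?D \<in> components (induced H S)"
    using comp_of_in_components[of z "induced G S"] zS by (simp_all add: ind)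
  show ?thesis
  proof (cases "{z, z'} \<in> edges G")
    case True
    have v: "z \<in> verts G" "z' \<in> verts G" using wf_graph_edgeD[OF wfG True] by auto
    have "?D \<subseteq> comp_of G z'"
      using comp_of_induced_subset[OF SG] comp_of_eq[OF wfG reach_edge[OF v(1) True]] by blast
    then have "{(1, comp_of G z'), (0, ?D)} \<in> edges aux"
      using aux_sum_edge_left[OF comp_of_in_components[OF v(2)] D(1)] by blast
    then show ?thesis using zS z'S v by (simp add: aux_node_def insert_commute)
  next
    case False
    then have eH: "{z, z'} \<in> edges H" using e by blast
    have v: "z \<in> verts H" "z' \<in> verts H" using wf_graph_edgeD[OF wfH eH] by auto
    have z'G: "z' \<notin> verts G" using shared_vertex_in_S v z'S by blast
    have "?D \<subseteq> comp_of H z'"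
      using comp_of_induced_subset[OF SH, of z] comp_of_eq[OF wfH reach_edge[OF v(1) eH]]
      by (simp add: ind)
    then have "{(2, comp_of H z'), (0, ?D)} \<in> edges aux"
      using aux_sum_edge_right[OF comp_of_in_components[OF v(2)] D(2)] by blast
    then show ?thesis using zS z'S z'G by (simp add: aux_node_def insert_commute)
  qed
qed

lemma aux_node_edge:
  assumes e: "{z, z'} \<in> edges G \<union> edges H"
  shows "node z = node z' \<or> {node z, node z'} \<in> edges aux"
proof -
  have e': "{z', z} \<in> edges G \<union> edges H" using e by (simp add: insert_commute)
  consider "z \<in> S" "z' \<in> S" | "z \<in> S \<longleftrightarrow> z' \<notin> S" | "z \<notin> S" "z' \<notin> S"
    by blast
  then show ?thesis
  proof cases
    case 1
    then have "{z, z'} \<in> edges G" using edge_between_G_verts[OF e] SG by blast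
    then have "{z, z'} \<in> edges (induced G S)" using 1 by simp
    then have "reach (induced G S) z z'" using 1 by (intro reach_edge) auto
    then show ?thesis
      using 1 comp_of_eq[OF wf_graph_induced[OF wfG SG]] by (simp add: aux_node_def)
  next
    case 2
    then show ?thesis
      using aux_node_boundary_edge[OF e] aux_node_boundary_edge[OF e'] by (auto simp: insert_commute)
  next
    case 3
    show ?thesis
    proof (cases "{z, z'} \<in> edges G")
      case True
      have v: "z \<in> verts G" "z' \<in> verts G" using wf_graph_edgeD[OF wfG True] by auto
      then show ?thesis
        using 3 comp_of_eq[OF wfG reach_edge[OF v(1) True]] by (simp add: aux_node_def)
    next
      case False
      then have eH: "{z, z'} \<in> edges H" using e by blast
      have v: "z \<in> verts H" "z' \<in> verts H" using wf_graph_edgeD[OF wfH eH] by auto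
      have "z \<notin> verts G" "z' \<notin> verts G" using shared_vertex_in_S v 3 by blast+
      then show ?thesis
        using 3 comp_of_eq[OF wfH reach_edge[OF v(1) eH]] by (simp add: aux_node_def)
    qed
  qed
qed

lemma aux_node_not_comp: "w \<notin> comp_of G x0 \<Longrightarrow> node w \<noteq> (1, comp_of G x0)"
  using comp_of_self[of w G] by (auto simp: aux_node_def)

lemma aux_step_avoiding:
  assumes "{y, w} \<in> edges G \<union> edges H" "node y \<noteq> (1, C)" "node w \<noteq> (1, C)"
  shows "(node y, node w) \<in> (aux_adj_avoiding C)\<^sup>*"
  using aux_node_edge[OF assms(1)] assms(2,3) by (auto simp: aux_adj_avoiding_def)

lemma aux_edge_to_comp:
  assumes "x0 \<in> verts G" "c \<in> S" "c \<in> comp_of G x0"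
  shows "{(1, comp_of G x0), (0, comp_of (induced G S) c)} \<in> edges aux"
proof -
  have "comp_of G x0 = comp_of G c" using comp_of_eq[OF wfG] assms(3) by (simp add: comp_of_def)
  then have "comp_of (induced G S) c \<subseteq> comp_of G x0" using comp_of_induced_subset[OF SG] by simp
  then show ?thesis
    using aux_sum_edge_left[OF comp_of_in_components[OF assms(1)]]
      comp_of_in_components[of c "induced G S"] assms(2) by simp
qed

lemma comp_exit_in_S:
  assumes "y \<in> comp_of G x0" "w \<notin> comp_of G x0" "{y, w} \<in> edges G \<union> edges H"
  shows "y \<in> S"
proof -
  have "{y, w} \<in> edges H" using assms comp_of_edge_closed[OF wfG] by blast
  then have "y \<in> verts H" using wf_graph_edgeD[OF wfH] by blast
  moreover have "y \<in> verts G" using comp_of_subset_verts[OF wfG] assms(1) by blast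
  ultimately show ?thesis using shared_vertex_in_S by blast
qed

lemma comp_boundary_reconnect:
  assumes noc: "\<not> has_cycle aux" and x0: "x0 \<in> verts G"
    and c: "c \<in> S" "c \<in> comp_of G x0" and w: "w \<in> S" "w \<in> comp_of G x0"
    and path: "((0, comp_of (induced G S) c), (0, comp_of (induced G S) w))
                 \<in> (aux_adj_avoiding (comp_of G x0))\<^sup>*"
  shows "(c, w) \<in> (edge_adj (edges (induced G S)))\<^sup>*"
proof -
  have "comp_of (induced G S) c = comp_of (induced G S) w"
  proof (rule ccontr)
    assume ne: "comp_of (induced G S) c \<noteq> comp_of (induced G S) w"
    have "has_cycle aux"
      by (rule has_cycle_closing_path[OF aux_sum_edges_in_verts[OF ind]
            aux_edge_to_comp[OF x0 c] aux_edge_to_comp[OF x0 w]])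
        (use ne path in \<open>auto simp: aux_adj_avoiding_def\<close>)
    with noc show False by contradiction
  qed
  moreover have "w \<in> comp_of (induced G S) w" using comp_of_self[of w "induced G S"] w(1) by simp
  ultimately have "reach (induced G S) c w" unfolding comp_of_def by blast
  then show ?thesis by (simp add: reach_def adj_rel_eq_edge_adj)
qed

lemma reroute_into_G:
  assumes noc: "\<not> has_cycle aux" and x0: "x0 \<in> verts G" and EP: "EP \<subseteq> edges G \<union> edges H"
    and a: "a \<in> comp_of G x0" and p: "(a, z) \<in> (edge_adj EP)\<^sup>*" and z: "z \<in> comp_of G x0"
  shows "(a, z) \<in> (edge_adj ((EP \<inter> edges G) \<union> edges (induced G S)))\<^sup>*"
proof -
  define C where "C = comp_of G x0"
  define E where "E = (EP \<inter> edges G) \<union> edges (induced G S)"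
  define D where "D = comp_of (induced G S)"
  define R where "R = aux_adj_avoiding C"
  have CG: "C \<subseteq> verts G" using comp_of_subset_verts[OF wfG] by (simp add: C_def)
  have node_S: "node c = (0, D c)" if "c \<in> S" for c
    using that by (simp add: aux_node_def D_def)
  have node_out: "node w \<noteq> (1, C)" if "w \<notin> C" for w
    using aux_node_not_comp that by (simp add: C_def)
  \<comment> \<open>Outside C, remember the vertex c of S where the walk left C and a walk in Aux avoiding
    the node C from the component of c in G[S] to the node of the current vertex.\<close>
  define inv where "inv w \<longleftrightarrow> (if w \<in> C then (a, w) \<in> (edge_adj E)\<^sup>*
      else \<exists>c\<in>S \<inter> C. (a, c) \<in> (edge_adj E)\<^sup>* \<and> ((0, D c), node w) \<in> R\<^sup>*)" for w
  have "inv z" using p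
  proof (induction rule: rtrancl_induct)
    case base
    then show ?case using a by (simp add: inv_def C_def)
  next
    case (step y w)
    have yw: "{y, w} \<in> EP" using step(2) by (simp add: edge_adj_def)
    then have yw': "{y, w} \<in> edges G \<union> edges H" "{w, y} \<in> edges G \<union> edges H"
      using EP by (auto simp: insert_commute)
    consider "y \<in> C" "w \<in> C" | "y \<in> C" "w \<notin> C" | "y \<notin> C" "w \<notin> C" | "y \<notin> C" "w \<in> C"
      by blast
    then show ?case
    proof cases
      case 1
      then have "{y, w} \<in> E" using edge_between_G_verts[OF yw'(1)] CG yw by (auto simp: E_def)
      then show ?thesis using 1 step(3) by (simp add: inv_def edge_adj_def rtrancl_into_rtrancl)
    next
      case 2
      then have "y \<in> S" using comp_exit_in_S yw'(1) by (simp add: C_def)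
      then have "((0, D y), node w) \<in> R\<^sup>*"
        using aux_step_avoiding[OF yw'(1)] node_S node_out 2 by (simp add: R_def)
      then show ?thesis using 2 step(3) \<open>y \<in> S\<close> by (auto simp: inv_def)
    next
      case 3
      then have "(node y, node w) \<in> R\<^sup>*"
        using aux_step_avoiding[OF yw'(1)] node_out by (simp add: R_def)
      then show ?thesis using 3 step(3) by (auto simp: inv_def)
    next
      case 4
      then have wS: "w \<in> S" using comp_exit_in_S yw'(2) by (simp add: C_def)
      obtain c where c: "c \<in> S" "c \<in> C" "(a, c) \<in> (edge_adj E)\<^sup>*" "((0, D c), node y) \<in> R\<^sup>*"
        using 4 step(3) by (auto simp: inv_def)
      have "(node y, node w) \<in> R\<^sup>*"
        using aux_step_avoiding[OF yw'(1)] node_out node_S 4 wS by (simp add: R_def)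
      then have "((0, D c), (0, D w)) \<in> R\<^sup>*" using c(4) node_S[OF wS] by simp
      then have "(c, w) \<in> (edge_adj (edges (induced G S)))\<^sup>*"
        using comp_boundary_reconnect[OF noc x0] c(1,2) wS 4 by (simp add: C_def D_def R_def)
      then have "(c, w) \<in> (edge_adj E)\<^sup>*" by (rule edge_adj_rtrancl_mono[rotated]) (simp add: E_def)
      then show ?thesis using 4 c(3) by (simp add: inv_def)
    qed
  qed
  then show ?thesis using z by (simp add: inv_def C_def E_def)
qed

lemma S_block_containing_edge:
  assumes noc: "\<not> has_cycle aux" and F: "is_block (gsum G H) F"
    and eS: "e \<in> edges (induced G S)" and eF: "e \<in> edges F"
    and uvF: "{u, v} \<in> edges F" and uvG: "{u, v} \<in> edges G"
  shows "\<exists>B. S_block G G S B \<and> {u, v} \<in> edges B"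
proof -
  obtain B where B: "is_block G B" and uvB: "{u, v} \<in> edges B"
    using biconn_candidate_in_block[OF wfG biconn_candidate_edge[OF wfG uvG]] by auto
  show ?thesis
  proof (rule ccontr)
    assume "\<nexists>B. S_block G G S B \<and> {u, v} \<in> edges B"
    then have no_S_edge: "edges (induced G S) \<inter> edges B = {}"
      using B uvB unfolding S_block_def by blast
    have Bbc: "biconn_candidate G B" and Fbc: "biconn_candidate (gsum G H) F"
      using B F by (simp_all add: is_block_def)
    have BG: "verts B \<subseteq> verts G" "edges B \<subseteq> edges G"
      using Bbc by (auto simp: biconn_candidate_def subgraph_def)
    obtain x y where xy: "x \<noteq> y" "x \<in> verts B" "y \<in> verts B"
      and path: "(x, y) \<in> (edge_adj (edges F - edges B))\<^sup>*"
      using biconn_candidate_leaves_and_returns[OF Fbc biconn_candidate_wf[OF Bbc] uvB uvF eF]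
        eS no_S_edge by blast
    have "reach B x y" using Bbc xy by (auto simp: biconn_candidate_def connected_graph_def)
    then have y: "y \<in> comp_of G x" using reach_mono[OF BG] by (simp add: comp_of_def)
    have xG: "x \<in> verts G" using xy(2) BG(1) by blast
    have FGH: "edges F - edges B \<subseteq> edges G \<union> edges H"
      using Fbc by (auto simp: biconn_candidate_def subgraph_def gsum_def)
    have "(x, y) \<in> (edge_adj (((edges F - edges B) \<inter> edges G) \<union> edges (induced G S)))\<^sup>*"
      by (rule reroute_into_G[OF noc xG FGH comp_of_self[OF xG] path y])
    moreover have "((edges F - edges B) \<inter> edges G) \<union> edges (induced G S) \<subseteq> edges G" by auto
    moreover have "(((edges F - edges B) \<inter> edges G) \<union> edges (induced G S)) \<inter> edges B = {}"
      using no_S_edge by blast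
    ultimately show False using block_no_detour[OF B wfG xy] by blast
  qed
qed

end

lemma has_cycle_image:
  assumes "has_cycle X" and inj: "inj g"
    and edges: "\<And>e. e \<in> edges X \<Longrightarrow> g ` e \<in> edges Y" and verts: "g ` verts X \<subseteq> verts Y"
  shows "has_cycle Y"
proof -
  obtain vs where vs: "length vs \<ge> 3" "distinct vs" "set vs \<subseteq> verts X"
    "\<forall>i. Suc i < length vs \<longrightarrow> {vs ! i, vs ! Suc i} \<in> edges X" "{last vs, hd vs} \<in> edges X"
    using assms(1) unfolding has_cycle_def by blast
  have "vs \<noteq> []" using vs(1) by auto
  have "{map g vs ! i, map g vs ! Suc i} \<in> edges Y" if "Suc i < length (map g vs)" for i
    using edges[OF vs(4)[rule_format, of i]] that by simp
  moreover have "{last (map g vs), hd (map g vs)} \<in> edges Y"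
    using edges[OF vs(5)] \<open>vs \<noteq> []\<close> by (simp add: last_map hd_map)
  moreover have "distinct (map g vs)" using vs(2) inj by (simp add: distinct_map inj_on_def)
  ultimately show ?thesis
    using vs(1,3) verts unfolding has_cycle_def by (intro exI[of _ "map g vs"]) auto
qed

definition swap_sides :: "nat \<times> 'a set \<Rightarrow> nat \<times> 'a set" where
  "swap_sides p = (if fst p = 1 then 2 else if fst p = 2 then 1 else fst p, snd p)"

lemma inj_swap_sides: "inj swap_sides"
  unfolding inj_def swap_sides_def by (auto split: if_splits simp: prod_eq_iff)

lemma has_cycle_aux_sum_swap:
  assumes ind: "induced G S = induced H S" and cyc: "has_cycle (aux_sum H G S)"
  shows "has_cycle (aux_sum G H S)"
proof (rule has_cycle_image[OF cyc inj_swap_sides])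
  fix e assume "e \<in> edges (aux_sum H G S)"
  then obtain C D where "e = {(1, C), (0, D)} \<and> C \<in> components H \<and> D \<in> components (induced H S) \<and> D \<subseteq> C
      \<or> e = {(2, C), (0, D)} \<and> C \<in> components G \<and> D \<in> components (induced G S) \<and> D \<subseteq> C"
    unfolding aux_sum_def edges_pair by blast
  then show "swap_sides ` e \<in> edges (aux_sum G H S)"
    using aux_sum_edge_left[of C G D S H] aux_sum_edge_right[of C H D S G]
    by (auto simp: swap_sides_def)
next
  show "swap_sides ` verts (aux_sum H G S) \<subseteq> verts (aux_sum G H S)"
    using ind unfolding aux_sum_def verts_pair by (auto simp: swap_sides_def)
qed

theorem lemma3p3:
  fixes G H :: "'a graph" and S :: "'a set" and d :: nat
    and labG labH :: "'a \<Rightarrow> nat" and F :: "'a graph" and u v :: 'a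
  assumes "labeled_boundaried d G S labG"
    and "labeled_boundaried d H S labH"
    and "compatible G labG H labH S"
    and "\<not> has_cycle (aux_sum G H S)"
    and "S_block (gsum G H) G S F"
    and "{u, v} \<in> edges F"
  shows "\<exists>B. (S_block G G S B \<and> {u, v} \<in> edges B) \<or> (S_block H H S B \<and> {u, v} \<in> edges B)"
proof -
  have ind: "induced G S = induced H S"
    using assms(3) by (simp add: compatible_def)
  interpret GH: boundaried_pair G H S
    using assms(1-3) by unfold_locales (auto simp: labeled_boundaried_def compatible_def)
  interpret HG: boundaried_pair H G S
    using assms(1-3) by unfold_locales (auto simp: labeled_boundaried_def compatible_def)
  obtain e where F: "is_block (gsum G H) F" and e: "e \<in> edges (induced G S)" "e \<in> edges F"
    using assms(5) by (auto simp: S_block_def)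
  have "{u, v} \<in> edges G \<union> edges H"
    using F assms(6) by (auto simp: is_block_def biconn_candidate_def subgraph_def gsum_def)
  moreover have "\<not> has_cycle (aux_sum H G S)"
    using assms(4) has_cycle_aux_sum_swap[OF ind] by blast
  moreover have "is_block (gsum H G) F" using F by (simp add: gsum_def Un_commute)
  ultimately show ?thesis
    using GH.S_block_containing_edge[OF assms(4) F e assms(6)]
      HG.S_block_containing_edge[of F e u v] e assms(6) ind by auto
qed

end
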